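(* Let $\mathbf A\in\mathbb K^{m\times n}$, $\mathbf b\in\mathbb K^m$, $\mathbf c\in\mathbb K^n$ satisfy assumption (A), and let $\boldsymbol\mu\in\mathbb K$ be positive. Then the problem $$\text{minimize } \mathbf c^T\mathbf x-\boldsymbol\mu\Big(\sum_{j=1}^n\log\mathbf x_j+\sum_{i=1}^m\log\mathbf w_i\Big)\quad\text{s.t. } \mathbf A\mathbf x+\mathbf w=\mathbf b,\ \mathbf x>0,\ \mathbf w>0$$ and the problem $$\text{maximize } -\mathbf b^T\mathbf y+\boldsymbol\mu\Big(\sum_{j=1}^n\log\mathbf s_j+\sum_{i=1}^m\log\mathbf y_i\Big)\quad\text{s.t. } -\mathbf A^T\mathbf y+\mathbf s=\mathbf c,\ \mathbf s>0,\ \mathbf y>0,$$ where the variables range over vectors with entries in $\mathbb K$ and objective values are compared in $H(\bar{\mathbb R}_{\exp})$, each have a unique optimal solution. These solutions are $(\mathbf x^{\boldsymbol\mu},\mathbf w^{\boldsymbol\mu})$ and $(\mathbf y^{\boldsymbol\mu},\mathbf s^{\boldsymbol\mu})$ respectively.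
   Context: $\mathbb K$ is the field of germs at $+\infty$ of real functions definable in $\bar{\mathbb R}^{\mathbb R}$, the ordered real field expanded by the power functions $t\mapsto t^r$ ($r\in\mathbb R$; set to $0$ for $t\le0$). It is real closed, with $\mathbf f>0$ iff $\mathbf f(t)>0$ for large $t$. $\bar{\mathbb R}_{\exp}$ is the o-minimal expansion of the ordered real field by the exponential function. $H(\bar{\mathbb R}_{\exp})$ is the ordered field of germs at $+\infty$ of functions definable in $\bar{\mathbb R}_{\exp}$. It contains $\mathbb K$, and for positive $\mathbf f\in\mathbb K$, $\log\mathbf f$ denotes the germ of $t\mapsto\log \mathbf f(t)$, an element of $H(\bar{\mathbb R}_{\exp})$. Assumption (A): there exist $\mathbf x^\circ,\mathbf w^\circ,\mathbf y^\circ,\mathbf s^\circ$ with positive entries in $\mathbb K$ such that $\mathbf A\mathbf x^\circ+\mathbf w^\circ=\mathbf b$ and $-\mathbf A^T\mathbf y^\circ+\mathbf s^\circ=\mathbf c$. $(\mathbf x^{\boldsymbol\mu},\mathbf w^{\boldsymbol\mu},\mathbf y^{\boldsymbol\mu},\mathbf s^{\boldsymbol\mu})$ denotes the unique solution over $\mathbb K$ (which exists under (A)) of $\mathbf A\mathbf x+\mathbf w=\mathbf b$, $-\mathbf A^T\mathbf y+\mathbf s=\mathbf c$, $\mathbf w_i\mathbf y_i=\boldsymbol\mu$ ($i\in[m]$), $\mathbf x_j\mathbf s_j=\boldsymbol\mu$ ($j\in[n]$), $\mathbf x,\mathbf w,\mathbf y,\mathbf s>0$. *)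

theory Defs
  imports Complex_Main
begin

definition pw :: "real \<Rightarrow> real \<Rightarrow> real" where
  "pw r t = (if t > 0 then exp (r * ln t) else 0)"

datatype tm = Var nat | Cst real | Plus tm tm | Times tm tm | Uminus tm | PowT real tm

datatype fm = Eq tm tm | Lt tm tm | Neg fm | Conj fm fm | Ex nat fm

primrec tval :: "(nat \<Rightarrow> real) \<Rightarrow> tm \<Rightarrow> real" where
  "tval e (Var k) = e k"
| "tval e (Cst a) = a"
| "tval e (Plus s u) = tval e s + tval e u"
| "tval e (Times s u) = tval e s * tval e u"
| "tval e (Uminus s) = - tval e s"
| "tval e (PowT r s) = pw r (tval e s)"

primrec sat :: "(nat \<Rightarrow> real) \<Rightarrow> fm \<Rightarrow> bool" where
  "sat e (Eq s u) = (tval e s = tval e u)"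
| "sat e (Lt s u) = (tval e s < tval e u)"
| "sat e (Neg p) = (\<not> sat e p)"
| "sat e (Conj p q) = (sat e p \<and> sat e q)"
| "sat e (Ex k p) = (\<exists>v. sat (e(k := v)) p)"

text \<open>A function R -> R definable (with parameters) in R^R: its graph is
  defined by a first-order formula with free variables 0 (argument) and 1 (value).
  Elements of the field K are germs at +infinity of such functions; we work with
  representatives.\<close>
definition inK :: "(real \<Rightarrow> real) \<Rightarrow> bool" where
  "inK f \<longleftrightarrow> (\<exists>\<phi>. \<forall>t y. (f t = y) \<longleftrightarrow>
      sat (\<lambda>k. if k = 0 then t else if k = 1 then y else 0) \<phi>)"

definition germ_eq :: "(real \<Rightarrow> real) \<Rightarrow> (real \<Rightarrow> real) \<Rightarrow> bool" where
  "germ_eq f g \<longleftrightarrow> (\<forall>\<^sub>F t in at_top. f t = g t)"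

definition germ_pos :: "(real \<Rightarrow> real) \<Rightarrow> bool" where
  "germ_pos f \<longleftrightarrow> (\<forall>\<^sub>F t in at_top. f t > 0)"

definition germ_le :: "(real \<Rightarrow> real) \<Rightarrow> (real \<Rightarrow> real) \<Rightarrow> bool" where
  "germ_le f g \<longleftrightarrow> (\<forall>\<^sub>F t in at_top. f t \<le> g t)"

type_synonym gvec = "nat \<Rightarrow> real \<Rightarrow> real"
type_synonym gmat = "nat \<Rightarrow> nat \<Rightarrow> real \<Rightarrow> real"

definition vecK :: "nat \<Rightarrow> gvec \<Rightarrow> bool" where
  "vecK k v \<longleftrightarrow> (\<forall>i<k. inK (v i))"

definition vec_pos :: "nat \<Rightarrow> gvec \<Rightarrow> bool" where
  "vec_pos k v \<longleftrightarrow> (\<forall>i<k. germ_pos (v i))"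

definition matK :: "nat \<Rightarrow> nat \<Rightarrow> gmat \<Rightarrow> bool" where
  "matK m n A \<longleftrightarrow> (\<forall>i<m. \<forall>j<n. inK (A i j))"

definition primal_eq :: "nat \<Rightarrow> nat \<Rightarrow> gmat \<Rightarrow> gvec \<Rightarrow> gvec \<Rightarrow> gvec \<Rightarrow> bool" where
  "primal_eq m n A b x w \<longleftrightarrow>
     (\<forall>i<m. germ_eq (\<lambda>t. (\<Sum>j<n. A i j t * x j t) + w i t) (b i))"

definition dual_eq :: "nat \<Rightarrow> nat \<Rightarrow> gmat \<Rightarrow> gvec \<Rightarrow> gvec \<Rightarrow> gvec \<Rightarrow> bool" where
  "dual_eq m n A c y s \<longleftrightarrow>
     (\<forall>j<n. germ_eq (\<lambda>t. - (\<Sum>i<m. A i j t * y i t) + s j t) (c j))"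

definition assumption_A :: "nat \<Rightarrow> nat \<Rightarrow> gmat \<Rightarrow> gvec \<Rightarrow> gvec \<Rightarrow> bool" where
  "assumption_A m n A b c \<longleftrightarrow>
     (\<exists>x w y s. vecK n x \<and> vecK m w \<and> vecK m y \<and> vecK n s \<and>
        vec_pos n x \<and> vec_pos m w \<and> vec_pos m y \<and> vec_pos n s \<and>
        primal_eq m n A b x w \<and> dual_eq m n A c y s)"

definition central_point ::
  "nat \<Rightarrow> nat \<Rightarrow> gmat \<Rightarrow> gvec \<Rightarrow> gvec \<Rightarrow> (real \<Rightarrow> real) \<Rightarrow> gvec \<Rightarrow> gvec \<Rightarrow> gvec \<Rightarrow> gvec \<Rightarrow> bool" where
  "central_point m n A b c \<mu> x w y s \<longleftrightarrow>
     vecK n x \<and> vecK m w \<and> vecK m y \<and> vecK n s \<and>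
     vec_pos n x \<and> vec_pos m w \<and> vec_pos m y \<and> vec_pos n s \<and>
     primal_eq m n A b x w \<and> dual_eq m n A c y s \<and>
     (\<forall>i<m. germ_eq (\<lambda>t. w i t * y i t) \<mu>) \<and>
     (\<forall>j<n. germ_eq (\<lambda>t. x j t * s j t) \<mu>)"

definition primal_feasible :: "nat \<Rightarrow> nat \<Rightarrow> gmat \<Rightarrow> gvec \<Rightarrow> gvec \<Rightarrow> gvec \<Rightarrow> bool" where
  "primal_feasible m n A b x w \<longleftrightarrow>
     vecK n x \<and> vecK m w \<and> vec_pos n x \<and> vec_pos m w \<and> primal_eq m n A b x w"

text \<open>Objective value, as an element of H(R_exp) (a germ at +infinity).\<close>
definition primal_obj :: "nat \<Rightarrow> nat \<Rightarrow> gvec \<Rightarrow> (real \<Rightarrow> real) \<Rightarrow> gvec \<Rightarrow> gvec \<Rightarrow> real \<Rightarrow> real" where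
  "primal_obj m n c \<mu> x w = (\<lambda>t. (\<Sum>j<n. c j t * x j t)
      - \<mu> t * ((\<Sum>j<n. ln (x j t)) + (\<Sum>i<m. ln (w i t))))"

definition primal_optimal ::
  "nat \<Rightarrow> nat \<Rightarrow> gmat \<Rightarrow> gvec \<Rightarrow> gvec \<Rightarrow> (real \<Rightarrow> real) \<Rightarrow> gvec \<Rightarrow> gvec \<Rightarrow> bool" where
  "primal_optimal m n A b c \<mu> x w \<longleftrightarrow> primal_feasible m n A b x w \<and>
     (\<forall>x' w'. primal_feasible m n A b x' w' \<longrightarrow>
        germ_le (primal_obj m n c \<mu> x w) (primal_obj m n c \<mu> x' w'))"

definition dual_feasible :: "nat \<Rightarrow> nat \<Rightarrow> gmat \<Rightarrow> gvec \<Rightarrow> gvec \<Rightarrow> gvec \<Rightarrow> bool" where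
  "dual_feasible m n A c y s \<longleftrightarrow>
     vecK m y \<and> vecK n s \<and> vec_pos m y \<and> vec_pos n s \<and> dual_eq m n A c y s"

definition dual_obj :: "nat \<Rightarrow> nat \<Rightarrow> gvec \<Rightarrow> (real \<Rightarrow> real) \<Rightarrow> gvec \<Rightarrow> gvec \<Rightarrow> real \<Rightarrow> real" where
  "dual_obj m n b \<mu> y s = (\<lambda>t. - (\<Sum>i<m. b i t * y i t)
      + \<mu> t * ((\<Sum>j<n. ln (s j t)) + (\<Sum>i<m. ln (y i t))))"

definition dual_optimal ::
  "nat \<Rightarrow> nat \<Rightarrow> gmat \<Rightarrow> gvec \<Rightarrow> gvec \<Rightarrow> (real \<Rightarrow> real) \<Rightarrow> gvec \<Rightarrow> gvec \<Rightarrow> bool" where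
  "dual_optimal m n A b c \<mu> y s \<longleftrightarrow> dual_feasible m n A c y s \<and>
     (\<forall>y' s'. dual_feasible m n A c y' s' \<longrightarrow>
        germ_le (dual_obj m n b \<mu> y' s') (dual_obj m n b \<mu> y s))"

end

theory Submission
  imports Defs "HOL-Analysis.Analysis" "HOL-Library.Countable"
begin

text \<open>
  For a fixed time \<open>t\<close> everything happens over the reals. A tangent-line bound for
  \<open>ln\<close> shows that a solution \<open>(x, w, y, s)\<close> of the central path equations minimises the
  primal barrier, strictly, among all strictly feasible \<open>(x', w')\<close>; in particular the solution
  is unique. The dual problem is the primal problem for \<open>(-A\<^sup>T, c, b)\<close> with the roles of
  \<open>(x, w)\<close> and \<open>(y, s)\<close> exchanged, so the dual statements come for free. A solution exists:
  after subtracting the dual feasibility equation the barrier splits into one-dimensional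
  coercive terms \<open>a u - \<mu> ln u\<close>, so it attains its minimum on a compact sublevel set, and
  the stationarity conditions there are the central path equations.

  Since the solution at \<open>t\<close> is the unique solution of a first-order system whose
  parameters are definable functions of \<open>t\<close>, its components are again definable in the
  power-function structure, i.e.\ they are germs in K; the pointwise statements then hold
  eventually and lift to germs.
\<close>

section \<open>The central path equations over the reals\<close>

definition strictly_feasible ::
  "nat \<Rightarrow> nat \<Rightarrow> (nat \<Rightarrow> nat \<Rightarrow> real) \<Rightarrow> (nat \<Rightarrow> real) \<Rightarrow> (nat \<Rightarrow> real) \<Rightarrow> (nat \<Rightarrow> real) \<Rightarrow> bool" where
  "strictly_feasible m n A b x w \<longleftrightarrow>
     (\<forall>j<n. 0 < x j) \<and> (\<forall>i<m. 0 < w i) \<and> (\<forall>i<m. (\<Sum>j<n. A i j * x j) + w i = b i)"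

definition neg_transpose :: "(nat \<Rightarrow> nat \<Rightarrow> 'a::uminus) \<Rightarrow> nat \<Rightarrow> nat \<Rightarrow> 'a" where
  "neg_transpose A j i = - A i j"

definition central_eqs ::
  "nat \<Rightarrow> nat \<Rightarrow> (nat \<Rightarrow> nat \<Rightarrow> real) \<Rightarrow> (nat \<Rightarrow> real) \<Rightarrow> (nat \<Rightarrow> real) \<Rightarrow> real
    \<Rightarrow> (nat \<Rightarrow> real) \<Rightarrow> (nat \<Rightarrow> real) \<Rightarrow> (nat \<Rightarrow> real) \<Rightarrow> (nat \<Rightarrow> real) \<Rightarrow> bool" where
  "central_eqs m n A b c \<mu> x w y s \<longleftrightarrow>
     strictly_feasible m n A b x w \<and> strictly_feasible n m (neg_transpose A) c y s \<and>
     (\<forall>i<m. w i * y i = \<mu>) \<and> (\<forall>j<n. x j * s j = \<mu>)"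

definition primal_barrier ::
  "nat \<Rightarrow> nat \<Rightarrow> (nat \<Rightarrow> real) \<Rightarrow> real \<Rightarrow> (nat \<Rightarrow> real) \<Rightarrow> (nat \<Rightarrow> real) \<Rightarrow> real" where
  "primal_barrier m n c \<mu> x w = (\<Sum>j<n. c j * x j) - \<mu> * ((\<Sum>j<n. ln (x j)) + (\<Sum>i<m. ln (w i)))"

lemma neg_transpose_neg_transpose [simp]:
  fixes A :: "nat \<Rightarrow> nat \<Rightarrow> 'a::group_add"
  shows "neg_transpose (neg_transpose A) = A"
  by (simp add: neg_transpose_def fun_eq_iff)

lemma central_eqs_transpose:
  "central_eqs n m (neg_transpose A) c b \<mu> y s x w \<longleftrightarrow> central_eqs m n A b c \<mu> x w y s"
  unfolding central_eqs_def by (auto simp: mult.commute)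

lemma central_eqs_cong:
  assumes "\<forall>i<m. \<forall>j<n. A i j = A' i j" "\<forall>i<m. b i = b' i" "\<forall>j<n. c j = c' j" "\<mu> = \<mu>'"
    and "\<forall>j<n. x j = x' j" "\<forall>i<m. w i = w' i" "\<forall>i<m. y i = y' i" "\<forall>j<n. s j = s' j"
  shows "central_eqs m n A b c \<mu> x w y s \<longleftrightarrow> central_eqs m n A' b' c' \<mu>' x' w' y' s'"
proof -
  have "(\<Sum>j<n. A i j * x j) = (\<Sum>j<n. A' i j * x' j)" if "i < m" for i
    using assms that by (intro sum.cong) auto
  moreover have "(\<Sum>i<m. neg_transpose A j i * y i) = (\<Sum>i<m. neg_transpose A' j i * y' i)" if "j < n" for j
    using assms that by (intro sum.cong) (auto simp: neg_transpose_def)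
  ultimately show ?thesis
    using assms by (auto simp: central_eqs_def strictly_feasible_def)
qed

lemma barrier_gap_nonneg:
  fixes x x' s :: real
  assumes "0 < x" "0 < x'" "0 < s"
  shows "0 \<le> s * (x' - x) - x * s * (ln x' - ln x)"
proof -
  have "x * s * (ln x' - ln x) \<le> x * s * ((x' - x) / x)"
    using assms ln_diff_le by (intro mult_left_mono) auto
  also have "\<dots> = s * (x' - x)" using assms by simp
  finally show ?thesis by simp
qed

lemma barrier_gap_eq_0D:
  fixes x x' s :: real
  assumes "0 < x" "0 < x'" "0 < s" "s * (x' - x) - x * s * (ln x' - ln x) = 0"
  shows "x' = x"
proof (rule ccontr)
  assume "x' \<noteq> x"
  then have "ln x' - ln x < (x' - x) / x"
    using assms ln_diff_less[of x' x] by simp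
  then have "x * s * (ln x' - ln x) < x * s * ((x' - x) / x)"
    using assms by (intro mult_strict_left_mono) auto
  also have "\<dots> = s * (x' - x)" using assms by simp
  finally show False using assms(4) by simp
qed

lemma cost_difference:
  fixes A :: "nat \<Rightarrow> nat \<Rightarrow> real"
  assumes "\<forall>i<m. (\<Sum>j<n. A i j * x j) + w i = b i" "\<forall>i<m. (\<Sum>j<n. A i j * x' j) + w' i = b i"
    and "\<forall>j<n. (\<Sum>i<m. neg_transpose A j i * y i) + s j = c j"
  shows "(\<Sum>j<n. c j * x' j) - (\<Sum>j<n. c j * x j) =
    (\<Sum>j<n. s j * (x' j - x j)) + (\<Sum>i<m. y i * (w' i - w i))"
proof -
  have c: "c j = s j - (\<Sum>i<m. A i j * y i)" if "j < n" for j
    using assms(3) that by (auto simp: neg_transpose_def sum_negf)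
  have Ax: "(\<Sum>j<n. A i j * (x' j - x j)) = w i - w' i" if "i < m" for i
    using assms(1,2) that by (auto simp: right_diff_distrib sum_subtractf algebra_simps)
  have "(\<Sum>j<n. c j * x' j) - (\<Sum>j<n. c j * x j) = (\<Sum>j<n. c j * (x' j - x j))"
    by (simp add: right_diff_distrib sum_subtractf)
  also have "\<dots> = (\<Sum>j<n. s j * (x' j - x j)) - (\<Sum>j<n. (\<Sum>i<m. A i j * y i) * (x' j - x j))"
    by (simp add: c left_diff_distrib sum_subtractf)
  also have "(\<Sum>j<n. (\<Sum>i<m. A i j * y i) * (x' j - x j)) = (\<Sum>i<m. y i * (\<Sum>j<n. A i j * (x' j - x j)))"
    by (simp add: sum_distrib_left sum_distrib_right mult_ac sum.swap[of _ "{..<n}"])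
  also have "\<dots> = (\<Sum>i<m. y i * (w i - w' i))"
    by (simp add: Ax)
  finally show ?thesis by (simp add: right_diff_distrib sum_subtractf)
qed

lemma primal_barrier_difference:
  assumes central: "central_eqs m n A b c \<mu> x w y s" and feas: "strictly_feasible m n A b x' w'"
  shows "primal_barrier m n c \<mu> x' w' - primal_barrier m n c \<mu> x w =
    (\<Sum>j<n. s j * (x' j - x j) - x j * s j * (ln (x' j) - ln (x j))) +
    (\<Sum>i<m. y i * (w' i - w i) - w i * y i * (ln (w' i) - ln (w i)))"
proof -
  have \<mu>: "\<forall>j<n. x j * s j = \<mu>" "\<forall>i<m. w i * y i = \<mu>"
    using central by (auto simp: central_eqs_def)
  have "(\<Sum>j<n. s j * (x' j - x j) - x j * s j * (ln (x' j) - ln (x j))) =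
      (\<Sum>j<n. s j * (x' j - x j)) - \<mu> * ((\<Sum>j<n. ln (x' j)) - (\<Sum>j<n. ln (x j)))"
    using \<mu>(1) by (simp add: sum_subtractf flip: sum_distrib_left)
  moreover have "(\<Sum>i<m. y i * (w' i - w i) - w i * y i * (ln (w' i) - ln (w i))) =
      (\<Sum>i<m. y i * (w' i - w i)) - \<mu> * ((\<Sum>i<m. ln (w' i)) - (\<Sum>i<m. ln (w i)))"
    using \<mu>(2) by (simp add: sum_subtractf flip: sum_distrib_left)
  moreover have "(\<Sum>j<n. c j * x' j) - (\<Sum>j<n. c j * x j) =
      (\<Sum>j<n. s j * (x' j - x j)) + (\<Sum>i<m. y i * (w' i - w i))"
    using central feas by (intro cost_difference) (auto simp: central_eqs_def strictly_feasible_def)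
  ultimately show ?thesis
    unfolding primal_barrier_def by (simp only: right_diff_distrib distrib_left)
qed

lemma central_eqs_minimizes_primal_barrier:
  assumes central: "central_eqs m n A b c \<mu> x w y s" and feas: "strictly_feasible m n A b x' w'"
  shows "primal_barrier m n c \<mu> x w \<le> primal_barrier m n c \<mu> x' w'"
    and "primal_barrier m n c \<mu> x' w' \<le> primal_barrier m n c \<mu> x w \<Longrightarrow>
      (\<forall>j<n. x' j = x j) \<and> (\<forall>i<m. w' i = w i)"
proof -
  define gx where "gx j = s j * (x' j - x j) - x j * s j * (ln (x' j) - ln (x j))" for j
  define gw where "gw i = y i * (w' i - w i) - w i * y i * (ln (w' i) - ln (w i))" for i
  have pos: "\<forall>j<n. 0 < x j \<and> 0 < s j \<and> 0 < x' j" "\<forall>i<m. 0 < w i \<and> 0 < y i \<and> 0 < w' i"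
    using central feas by (auto simp: central_eqs_def strictly_feasible_def)
  have gx: "\<forall>j\<in>{..<n}. 0 \<le> gx j" and gw: "\<forall>i\<in>{..<m}. 0 \<le> gw i"
    unfolding gx_def gw_def by (intro ballI barrier_gap_nonneg; use pos in simp)+
  have diff: "primal_barrier m n c \<mu> x' w' - primal_barrier m n c \<mu> x w = sum gx {..<n} + sum gw {..<m}"
    unfolding gx_def gw_def by (rule primal_barrier_difference[OF central feas])
  moreover have "0 \<le> sum gx {..<n}" "0 \<le> sum gw {..<m}"
    using gx gw by (simp_all add: sum_nonneg del: lessThan_iff)
  ultimately show "primal_barrier m n c \<mu> x w \<le> primal_barrier m n c \<mu> x' w'"
    by linarith
  assume "primal_barrier m n c \<mu> x' w' \<le> primal_barrier m n c \<mu> x w"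
  with diff \<open>0 \<le> sum gx {..<n}\<close> \<open>0 \<le> sum gw {..<m}\<close>
  have "sum gx {..<n} = 0" "sum gw {..<m} = 0" by linarith+
  then have "\<forall>j\<in>{..<n}. gx j = 0" "\<forall>i\<in>{..<m}. gw i = 0"
    using gx gw by (simp_all add: sum_nonneg_eq_0_iff del: lessThan_iff)
  then show "(\<forall>j<n. x' j = x j) \<and> (\<forall>i<m. w' i = w i)"
    using pos by (auto simp: gx_def gw_def intro: barrier_gap_eq_0D)
qed

lemma central_eqs_unique:
  assumes "central_eqs m n A b c \<mu> x w y s" "central_eqs m n A b c \<mu> x' w' y' s'"
  shows "(\<forall>j<n. x' j = x j) \<and> (\<forall>i<m. w' i = w i) \<and> (\<forall>i<m. y' i = y i) \<and> (\<forall>j<n. s' j = s j)"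
proof -
  have "strictly_feasible m n A b x w" "strictly_feasible m n A b x' w'"
    using assms by (simp_all add: central_eqs_def)
  then have xw: "(\<forall>j<n. x' j = x j) \<and> (\<forall>i<m. w' i = w i)"
    using assms by (meson central_eqs_minimizes_primal_barrier)
  have "\<forall>i<m. 0 < w i \<and> w i * y i = w' i * y' i" "\<forall>j<n. 0 < x j \<and> x j * s j = x' j * s' j"
    using assms by (auto simp: central_eqs_def strictly_feasible_def)
  with xw show ?thesis by auto
qed

section \<open>Existence of the central point over the reals\<close>

lemma linear_minus_log_lower_bound:
  fixes a u \<mu> :: real
  assumes "0 < a" "0 < u" "0 < \<mu>"
  shows "\<mu> - \<mu> * ln (\<mu> / a) \<le> a * u - \<mu> * ln u"
proof -
  have "ln u - ln (\<mu> / a) \<le> (u - \<mu> / a) / (\<mu> / a)"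
    using assms by (intro ln_diff_le) auto
  then have "\<mu> * (ln u - ln (\<mu> / a)) \<le> \<mu> * ((u - \<mu> / a) / (\<mu> / a))"
    using assms by (intro mult_left_mono) auto
  also have "\<dots> = a * u - \<mu>"
    using assms by (simp add: field_simps)
  finally show ?thesis by (simp add: algebra_simps)
qed

lemma linear_minus_log_sublevel:
  fixes a u \<mu> R :: real
  assumes "0 < a" "0 < u" "0 < \<mu>" "a * u - \<mu> * ln u \<le> R"
  shows "exp (- R / \<mu>) \<le> u" and "u \<le> 2 * (R - (\<mu> - \<mu> * ln (2 * \<mu> / a))) / a"
proof -
  have "0 < a * u"
    using assms by simp
  then have "- R < \<mu> * ln u"
    using assms(4) by linarith
  then have "- R / \<mu> < ln u"
    using assms(3) by (simp add: field_simps)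
  then have "exp (- R / \<mu>) < exp (ln u)"
    by simp
  then show "exp (- R / \<mu>) \<le> u"
    using assms by simp
  have "\<mu> - \<mu> * ln (\<mu> / (a / 2)) \<le> a / 2 * u - \<mu> * ln u"
    using assms by (intro linear_minus_log_lower_bound) auto
  then show "u \<le> 2 * (R - (\<mu> - \<mu> * ln (2 * \<mu> / a))) / a"
    using assms by (simp add: field_simps)
qed

lemma eventually_all_less:
  fixes k :: nat
  shows "(\<forall>\<^sub>F t in F. \<forall>i<k. P i t) \<longleftrightarrow> (\<forall>i<k. \<forall>\<^sub>F t in F. P i t)"
  using eventually_ball_finite_distrib[OF finite_lessThan[of k], of "\<lambda>t i. P i t" F] by (simp add: Ball_def)

lemma sum_ge_neg_sum_abs:
  fixes h \<gamma> :: "'a \<Rightarrow> real"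
  assumes "\<forall>l\<in>K. \<gamma> l \<le> h l"
  shows "- (\<Sum>l\<in>K. \<bar>\<gamma> l\<bar>) \<le> sum h K"
proof -
  have "(\<Sum>l\<in>K. - \<bar>\<gamma> l\<bar>) \<le> sum h K" using assms by (intro sum_mono) force
  then show ?thesis by (simp add: sum_negf)
qed

lemma member_le_sum_plus_sum_abs:
  fixes h \<gamma> :: "'a \<Rightarrow> real"
  assumes "finite K" "k \<in> K" "\<forall>l\<in>K. \<gamma> l \<le> h l"
  shows "h k \<le> sum h K + (\<Sum>l\<in>K. \<bar>\<gamma> l\<bar>)"
proof -
  have "- (\<Sum>l\<in>K - {k}. \<bar>\<gamma> l\<bar>) \<le> sum h (K - {k})"
    using assms by (intro sum_ge_neg_sum_abs) auto
  moreover have "(\<Sum>l\<in>K - {k}. \<bar>\<gamma> l\<bar>) \<le> (\<Sum>l\<in>K. \<bar>\<gamma> l\<bar>)"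
    using assms by (intro sum_mono2) auto
  ultimately show ?thesis
    using assms sum.remove[of K k h] by linarith
qed

lemmas continuous_on_coordinate [continuous_intros] =
  continuous_on_product_then_coordinatewise[OF continuous_on_id]

locale barrier_problem =
  fixes m n :: nat and A :: "nat \<Rightarrow> nat \<Rightarrow> real" and b c :: "nat \<Rightarrow> real" and \<mu> :: real
    and x0 w0 y0 s0 :: "nat \<Rightarrow> real"
  assumes mu_pos: "0 < \<mu>"
    and primal_start: "strictly_feasible m n A b x0 w0"
    and dual_start: "strictly_feasible n m (neg_transpose A) c y0 s0"
begin

definition slack :: "(nat \<Rightarrow> real) \<Rightarrow> nat \<Rightarrow> real" where
  "slack z i = b i - (\<Sum>j<n. A i j * z j)"

definition barrier_domain :: "(nat \<Rightarrow> real) set" where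
  "barrier_domain = {z. (\<forall>j<n. 0 < z j) \<and> (\<forall>i<m. 0 < slack z i) \<and> (\<forall>j\<ge>n. z j = 0)}"

definition barrier :: "(nat \<Rightarrow> real) \<Rightarrow> real" where
  "barrier z = primal_barrier m n c \<mu> z (slack z)"

lemma continuous_on_slack [continuous_intros]: "continuous_on S (\<lambda>z. slack z i)"
  unfolding slack_def by (intro continuous_intros)

text \<open>Replacing \<open>c\<close> by \<open>s0 - A\<^sup>T y0\<close> turns the linear part into a sum over the
  coordinates and the slacks, each paired with its own logarithm.\<close>

lemma barrier_split:
  "barrier z = (\<Sum>j<n. s0 j * z j - \<mu> * ln (z j)) + (\<Sum>i<m. y0 i * slack z i - \<mu> * ln (slack z i))
     - (\<Sum>i<m. b i * y0 i)"
proof -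
  have "(\<Sum>j<n. c j * z j) - (\<Sum>j<n. c j * 0) = (\<Sum>j<n. s0 j * (z j - 0)) + (\<Sum>i<m. y0 i * (slack z i - b i))"
    using dual_start by (intro cost_difference) (auto simp: slack_def strictly_feasible_def)
  then show ?thesis
    by (simp add: barrier_def primal_barrier_def sum_subtractf right_diff_distrib distrib_left sum_distrib_left mult.commute)
qed

lemma barrier_sublevel_terms:
  assumes z: "z \<in> barrier_domain" "barrier z \<le> r"
  defines "R \<equiv> r + (\<Sum>i<m. b i * y0 i) + (\<Sum>j<n. \<bar>\<mu> - \<mu> * ln (\<mu> / s0 j)\<bar>) + (\<Sum>i<m. \<bar>\<mu> - \<mu> * ln (\<mu> / y0 i)\<bar>)"
  shows "(\<forall>j<n. s0 j * z j - \<mu> * ln (z j) \<le> R) \<and> (\<forall>i<m. y0 i * slack z i - \<mu> * ln (slack z i) \<le> R)"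
proof -
  define \<phi> where "\<phi> a u = a * u - \<mu> * ln u" for a u :: real
  define \<beta> where "\<beta> a = \<mu> - \<mu> * ln (\<mu> / a)" for a :: real
  have "\<forall>j<n. 0 < s0 j" "\<forall>i<m. 0 < y0 i"
    using dual_start by (simp_all add: strictly_feasible_def)
  then have lowx: "\<forall>j\<in>{..<n}. \<beta> (s0 j) \<le> \<phi> (s0 j) (z j)"
    and lowy: "\<forall>i\<in>{..<m}. \<beta> (y0 i) \<le> \<phi> (y0 i) (slack z i)"
    using z(1) mu_pos by (auto simp: barrier_domain_def \<beta>_def \<phi>_def linear_minus_log_lower_bound)
  have total: "(\<Sum>j<n. \<phi> (s0 j) (z j)) + (\<Sum>i<m. \<phi> (y0 i) (slack z i)) \<le> r + (\<Sum>i<m. b i * y0 i)"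
    using z(2) barrier_split[of z] unfolding \<phi>_def by linarith
  have "\<phi> (s0 j) (z j) \<le> R" if "j < n" for j
    using member_le_sum_plus_sum_abs[OF _ _ lowx, of j] sum_ge_neg_sum_abs[OF lowy] total that
    unfolding R_def \<beta>_def by simp
  moreover have "\<phi> (y0 i) (slack z i) \<le> R" if "i < m" for i
    using member_le_sum_plus_sum_abs[OF _ _ lowy, of i] sum_ge_neg_sum_abs[OF lowx] total that
    unfolding R_def \<beta>_def by simp
  ultimately show ?thesis
    unfolding \<phi>_def by blast
qed

lemma barrier_sublevel_bounds:
  obtains \<epsilon> M where "0 < \<epsilon>"
    and "\<And>z. z \<in> barrier_domain \<Longrightarrow> barrier z \<le> r \<Longrightarrow>
      (\<forall>j<n. \<epsilon> \<le> z j \<and> z j \<le> M) \<and> (\<forall>i<m. \<epsilon> \<le> slack z i \<and> slack z i \<le> M)"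
proof -
  define R where "R = r + (\<Sum>i<m. b i * y0 i) + (\<Sum>j<n. \<bar>\<mu> - \<mu> * ln (\<mu> / s0 j)\<bar>)
    + (\<Sum>i<m. \<bar>\<mu> - \<mu> * ln (\<mu> / y0 i)\<bar>)"
  define U where "U a = \<bar>2 * (R - (\<mu> - \<mu> * ln (2 * \<mu> / a))) / a\<bar>" for a
  define M where "M = (\<Sum>j<n. U (s0 j)) + (\<Sum>i<m. U (y0 i))"
  have bound: "exp (- R / \<mu>) \<le> u \<and> u \<le> U a" if "0 < a" "0 < u" "a * u - \<mu> * ln u \<le> R" for a u
    using linear_minus_log_sublevel[OF that(1,2) mu_pos that(3)]
    unfolding U_def by (meson abs_ge_self order_trans)
  have "\<forall>j<n. U (s0 j) \<le> M"
    unfolding M_def U_def by (auto intro!: add_increasing2 member_le_sum sum_nonneg)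
  moreover have "\<forall>i<m. U (y0 i) \<le> M"
    unfolding M_def U_def by (auto intro!: add_increasing member_le_sum sum_nonneg)
  moreover have "\<forall>j<n. 0 < s0 j" "\<forall>i<m. 0 < y0 i"
    using dual_start by (simp_all add: strictly_feasible_def)
  ultimately have "(\<forall>j<n. exp (- R / \<mu>) \<le> z j \<and> z j \<le> M) \<and>
      (\<forall>i<m. exp (- R / \<mu>) \<le> slack z i \<and> slack z i \<le> M)"
    if z: "z \<in> barrier_domain" "barrier z \<le> r" for z
  proof (intro conjI allI impI)
    note terms = barrier_sublevel_terms[OF z, folded R_def]
    fix j assume "j < n"
    with terms z(1) \<open>\<forall>j<n. 0 < s0 j\<close> bound[of "s0 j" "z j"] \<open>\<forall>j<n. U (s0 j) \<le> M\<close>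
    show "exp (- R / \<mu>) \<le> z j" "z j \<le> M"
      by (auto simp: barrier_domain_def)
  next
    note terms = barrier_sublevel_terms[OF z, folded R_def]
    fix i assume "i < m"
    with terms z(1) \<open>\<forall>i<m. 0 < y0 i\<close> bound[of "y0 i" "slack z i"] \<open>\<forall>i<m. U (y0 i) \<le> M\<close>
    show "exp (- R / \<mu>) \<le> slack z i" "slack z i \<le> M"
      by (auto simp: barrier_domain_def)
  qed
  then show thesis
    using that[of "exp (- R / \<mu>)" M] by simp
qed

lemma compact_barrier_box:
  "compact {z. (\<forall>j<n. \<epsilon> \<le> z j \<and> z j \<le> M) \<and> (\<forall>j\<ge>n. z j = 0) \<and> (\<forall>i<m. \<epsilon> \<le> slack z i \<and> slack z i \<le> M)}"
proof -
  define S where "S j = (if j < n then {\<epsilon>..M} else {0::real})" for j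
  have "compactin (product_topology (\<lambda>_. euclidean) UNIV) (PiE UNIV S)"
    by (subst compactin_PiE) (auto simp: S_def)
  then have "compact (Pi UNIV S)"
    by (simp add: euclidean_product_topology PiE_UNIV_domain)
  moreover have "closed {z. \<forall>i<m. \<epsilon> \<le> slack z i \<and> slack z i \<le> M}"
  proof -
    have "{z. \<forall>i<m. \<epsilon> \<le> slack z i \<and> slack z i \<le> M} =
        (\<Inter>i<m. {z. \<epsilon> \<le> slack z i} \<inter> {z. slack z i \<le> M})"
      by auto
    then show ?thesis
      by (auto intro!: closed_INT closed_Int closed_Collect_le continuous_intros)
  qed
  moreover have "{z. (\<forall>j<n. \<epsilon> \<le> z j \<and> z j \<le> M) \<and> (\<forall>j\<ge>n. z j = 0) \<and> (\<forall>i<m. \<epsilon> \<le> slack z i \<and> slack z i \<le> M)}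
      = Pi UNIV S \<inter> {z. \<forall>i<m. \<epsilon> \<le> slack z i \<and> slack z i \<le> M}"
    by (auto simp: S_def Pi_iff split: if_splits)
  ultimately show ?thesis by (simp add: compact_Int_closed)
qed

lemma continuous_on_barrier:
  assumes "K \<subseteq> barrier_domain"
  shows "continuous_on K barrier"
proof -
  have "\<forall>z\<in>K. (\<forall>j<n. z j \<noteq> 0) \<and> (\<forall>i<m. slack z i \<noteq> 0)"
    using assms by (force simp: barrier_domain_def)
  then show ?thesis
    unfolding barrier_def primal_barrier_def by (intro continuous_intros) auto
qed

lemma barrier_has_minimizer:
  obtains z where "z \<in> barrier_domain" "\<And>z'. z' \<in> barrier_domain \<Longrightarrow> barrier z \<le> barrier z'"
proof -
  define z0 where "z0 j = (if j < n then x0 j else 0)" for j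
  have "slack z0 i = w0 i" if "i < m" for i
    using primal_start that by (force simp: slack_def z0_def strictly_feasible_def)
  then have z0: "z0 \<in> barrier_domain"
    using primal_start by (simp add: barrier_domain_def z0_def strictly_feasible_def)
  obtain \<epsilon> M where "0 < \<epsilon>" and box: "\<And>z. z \<in> barrier_domain \<Longrightarrow> barrier z \<le> barrier z0 \<Longrightarrow>
      (\<forall>j<n. \<epsilon> \<le> z j \<and> z j \<le> M) \<and> (\<forall>i<m. \<epsilon> \<le> slack z i \<and> slack z i \<le> M)"
    using barrier_sublevel_bounds by blast
  define K where "K = {z. (\<forall>j<n. \<epsilon> \<le> z j \<and> z j \<le> M) \<and> (\<forall>j\<ge>n. z j = 0) \<and>
      (\<forall>i<m. \<epsilon> \<le> slack z i \<and> slack z i \<le> M)}"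
  have K: "K \<subseteq> barrier_domain"
    using \<open>0 < \<epsilon>\<close> by (force simp: K_def barrier_domain_def)
  have "z0 \<in> K"
    using box[OF z0] z0 by (simp add: K_def barrier_domain_def)
  moreover have "continuous_on K barrier"
    using K by (rule continuous_on_barrier)
  ultimately obtain z where "z \<in> K" and min: "\<forall>z'\<in>K. barrier z \<le> barrier z'"
    using continuous_attains_inf[OF compact_barrier_box[of \<epsilon> M, folded K_def]] by blast
  show thesis
  proof (rule that)
    show "z \<in> barrier_domain" using \<open>z \<in> K\<close> K by blast
    fix z' assume z': "z' \<in> barrier_domain"
    show "barrier z \<le> barrier z'"
    proof (cases "barrier z' \<le> barrier z0")
      case True
      with box[OF z'] z' have "z' \<in> K" by (simp add: K_def barrier_domain_def)
      with min show ?thesis by blast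
    next
      case False
      with min \<open>z0 \<in> K\<close> show ?thesis by force
    qed
  qed
qed

lemma slack_along_line: "slack (\<lambda>k. z k + \<tau> * d k) i = slack z i - \<tau> * (\<Sum>k<n. A i k * d k)"
  by (simp add: slack_def algebra_simps sum.distrib sum_distrib_left)

lemma barrier_directional_derivative:
  assumes "z \<in> barrier_domain"
  shows "((\<lambda>\<tau>. barrier (\<lambda>k. z k + \<tau> * d k)) has_real_derivative
    (\<Sum>k<n. c k * d k) - \<mu> * ((\<Sum>k<n. d k / z k) - (\<Sum>i<m. (\<Sum>k<n. A i k * d k) / slack z i))) (at 0)"
proof -
  have "((\<lambda>\<tau>. barrier (\<lambda>k. z k + \<tau> * d k)) has_real_derivative
    (\<Sum>k<n. c k * (0 + 1 * d k)) - \<mu> * ((\<Sum>k<n. (0 + 1 * d k) / (z k + 0 * d k)) +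
      (\<Sum>i<m. (0 - 1 * (\<Sum>k<n. A i k * d k)) / (slack z i - 0 * (\<Sum>k<n. A i k * d k))))) (at 0)"
    using assms unfolding barrier_def primal_barrier_def slack_along_line
    by (intro derivative_eq_intros) (auto simp: barrier_domain_def)
  then show ?thesis by (simp add: sum_negf flip: minus_divide_left)
qed

lemma eventually_line_in_barrier_domain:
  assumes z: "z \<in> barrier_domain" and d: "\<forall>k\<ge>n. d k = 0"
  shows "\<forall>\<^sub>F \<tau> in at 0. (\<lambda>k. z k + \<tau> * d k) \<in> barrier_domain"
proof -
  have pos: "\<forall>k<n. 0 < z k" "\<forall>i<m. 0 < slack z i" and supp: "\<forall>k\<ge>n. z k = 0"
    using z by (simp_all add: barrier_domain_def)
  have "\<forall>\<^sub>F \<tau> in at 0. 0 < z k + \<tau> * d k" if "k < n" for k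
    using pos that by (intro order_tendstoD(1)[of _ "z k + 0 * d k"] tendsto_intros) auto
  moreover have "\<forall>\<^sub>F \<tau> in at 0. 0 < slack (\<lambda>k. z k + \<tau> * d k) i" if "i < m" for i
    using pos that unfolding slack_along_line
    by (intro order_tendstoD(1)[of _ "slack z i - 0 * (\<Sum>k<n. A i k * d k)"] tendsto_intros) auto
  ultimately have "\<forall>\<^sub>F \<tau> in at 0. (\<forall>k<n. 0 < z k + \<tau> * d k) \<and> (\<forall>i<m. 0 < slack (\<lambda>k. z k + \<tau> * d k) i)"
    by (simp add: eventually_all_less eventually_conj_iff)
  then show ?thesis
    by eventually_elim (use supp d in \<open>simp add: barrier_domain_def\<close>)
qed

lemma barrier_minimizer_stationary:
  assumes z: "z \<in> barrier_domain" and min: "\<forall>z'\<in>barrier_domain. barrier z \<le> barrier z'"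
    and j: "j < n"
  shows "c j - \<mu> / z j + \<mu> * (\<Sum>i<m. A i j / slack z i) = 0"
proof -
  define d where "d k = (if k = j then 1 else 0 :: real)" for k
  have "\<forall>k\<ge>n. d k = 0"
    using j by (simp add: d_def)
  with z have "\<forall>\<^sub>F \<tau> in at 0. (\<lambda>k. z k + \<tau> * d k) \<in> barrier_domain"
    by (rule eventually_line_in_barrier_domain)
  then have "\<forall>\<^sub>F \<tau> in at 0. barrier (\<lambda>k. z k + 0 * d k) \<le> barrier (\<lambda>k. z k + \<tau> * d k)"
    by eventually_elim (use min in simp)
  from has_derivative_local_min[OF barrier_directional_derivative[OF z, of d,
      unfolded has_field_derivative_def] this]
  have "((\<Sum>k<n. c k * d k) - \<mu> * ((\<Sum>k<n. d k / z k) - (\<Sum>i<m. (\<Sum>k<n. A i k * d k) / slack z i))) * 1 = 0"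
    by (rule fun_cong)
  moreover have "(\<Sum>k<n. f k * d k) = f j" for f :: "nat \<Rightarrow> real"
    using j by (simp add: d_def if_distrib[of "(*) (f _)"] cong: if_cong)
  moreover have "(\<Sum>k<n. d k / z k) = 1 / z j"
    using j by (subst sum.cong[OF refl, of _ _ "\<lambda>k. if k = j then 1 / z k else 0"]) (simp_all add: d_def)
  ultimately have "c j - \<mu> * (1 / z j - (\<Sum>i<m. A i j / slack z i)) = 0"
    by (simp only: mult_1_right)
  then show ?thesis
    by (simp add: right_diff_distrib sum_distrib_left)
qed

lemma central_eqs_solvable: "\<exists>x w y s. central_eqs m n A b c \<mu> x w y s"
proof -
  obtain z where z: "z \<in> barrier_domain" and min: "\<forall>z'\<in>barrier_domain. barrier z \<le> barrier z'"
    using barrier_has_minimizer by metis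
  have pos: "\<forall>j<n. 0 < z j" "\<forall>i<m. 0 < slack z i"
    using z by (simp_all add: barrier_domain_def)
  define y where "y i = \<mu> / slack z i" for i
  define s where "s j = \<mu> / z j" for j
  have dual_sum: "(\<Sum>i<m. neg_transpose A j i * y i) = - (\<mu> * (\<Sum>i<m. A i j / slack z i))" for j
  proof -
    have "(\<Sum>i<m. neg_transpose A j i * y i) = (\<Sum>i<m. - (\<mu> * (A i j / slack z i)))"
      by (simp add: neg_transpose_def y_def mult.commute)
    then show ?thesis by (simp add: sum_negf sum_distrib_left)
  qed
  have "\<forall>j<n. (\<Sum>i<m. neg_transpose A j i * y i) + s j = c j"
  proof (intro allI impI)
    fix j assume "j < n"
    from barrier_minimizer_stationary[OF z min this]
    show "(\<Sum>i<m. neg_transpose A j i * y i) + s j = c j"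
      unfolding dual_sum s_def by linarith
  qed
  moreover have "\<forall>i<m. 0 < y i" "\<forall>j<n. 0 < s j"
    using pos mu_pos by (simp_all add: y_def s_def)
  moreover have "\<forall>i<m. slack z i * y i = \<mu>" "\<forall>j<n. z j * s j = \<mu>"
    using pos by (auto simp: y_def s_def)
  moreover have "strictly_feasible m n A b z (slack z)"
    using pos by (simp add: strictly_feasible_def slack_def)
  ultimately have "central_eqs m n A b c \<mu> z (slack z) y s"
    by (simp add: central_eqs_def strictly_feasible_def)
  then show ?thesis by blast
qed

end

lemma central_eqs_exists:
  assumes "0 < \<mu>" "strictly_feasible m n A b x0 w0" "strictly_feasible n m (neg_transpose A) c y0 s0"
  shows "\<exists>x w y s. central_eqs m n A b c \<mu> x w y s"
proof -
  interpret barrier_problem m n A b c \<mu> x0 w0 y0 s0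
    using assms by unfold_locales
  show ?thesis by (rule central_eqs_solvable)
qed

section \<open>Definable functions\<close>

definition graph_env :: "real \<Rightarrow> real \<Rightarrow> nat \<Rightarrow> real" where
  "graph_env t y = (\<lambda>k. if k = 0 then t else if k = 1 then y else 0)"

lemma inK_iff_graph_env: "inK f \<longleftrightarrow> (\<exists>\<phi>. \<forall>t y. f t = y \<longleftrightarrow> sat (graph_env t y) \<phi>)"
  by (simp add: inK_def graph_env_def)

primrec rename_tm :: "(nat \<Rightarrow> nat) \<Rightarrow> tm \<Rightarrow> tm" where
  "rename_tm \<rho> (Var k) = Var (\<rho> k)"
| "rename_tm \<rho> (Cst a) = Cst a"
| "rename_tm \<rho> (Plus s u) = Plus (rename_tm \<rho> s) (rename_tm \<rho> u)"
| "rename_tm \<rho> (Times s u) = Times (rename_tm \<rho> s) (rename_tm \<rho> u)"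
| "rename_tm \<rho> (Uminus s) = Uminus (rename_tm \<rho> s)"
| "rename_tm \<rho> (PowT r s) = PowT r (rename_tm \<rho> s)"

primrec rename_fm :: "(nat \<Rightarrow> nat) \<Rightarrow> fm \<Rightarrow> fm" where
  "rename_fm \<rho> (Eq s u) = Eq (rename_tm \<rho> s) (rename_tm \<rho> u)"
| "rename_fm \<rho> (Lt s u) = Lt (rename_tm \<rho> s) (rename_tm \<rho> u)"
| "rename_fm \<rho> (Neg p) = Neg (rename_fm \<rho> p)"
| "rename_fm \<rho> (Conj p q) = Conj (rename_fm \<rho> p) (rename_fm \<rho> q)"
| "rename_fm \<rho> (Ex k p) = Ex (\<rho> k) (rename_fm \<rho> p)"

lemma tval_rename_tm: "tval e (rename_tm \<rho> s) = tval (e \<circ> \<rho>) s"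
  by (induction s) auto

lemma sat_rename_fm:
  assumes "inj \<rho>"
  shows "sat e (rename_fm \<rho> p) \<longleftrightarrow> sat (e \<circ> \<rho>) p"
proof (induction p arbitrary: e)
  case (Ex k p)
  have "(e(\<rho> k := v)) \<circ> \<rho> = (e \<circ> \<rho>)(k := v)" for v
    using assms by (auto simp: fun_eq_iff inj_eq)
  then show ?case by (simp only: rename_fm.simps sat.simps Ex.IH)
qed (simp_all add: tval_rename_tm)

primrec Ex_list :: "nat list \<Rightarrow> fm \<Rightarrow> fm" where
  "Ex_list [] p = p"
| "Ex_list (k # ks) p = Ex k (Ex_list ks p)"

lemma sat_Ex_list:
  "sat e (Ex_list ks p) \<longleftrightarrow> (\<exists>g. (\<forall>k. k \<notin> set ks \<longrightarrow> g k = e k) \<and> sat g p)"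
proof (induction ks arbitrary: e)
  case Nil
  then show ?case by (auto simp: fun_eq_iff)
next
  case (Cons k ks)
  show ?case
  proof
    assume "sat e (Ex_list (k # ks) p)"
    then obtain v g where "\<forall>l. l \<notin> set ks \<longrightarrow> g l = (e(k := v)) l" "sat g p"
      by (auto simp: Cons.IH)
    then show "\<exists>g. (\<forall>l. l \<notin> set (k # ks) \<longrightarrow> g l = e l) \<and> sat g p"
      by (intro exI[of _ g]) auto
  next
    assume "\<exists>g. (\<forall>l. l \<notin> set (k # ks) \<longrightarrow> g l = e l) \<and> sat g p"
    then obtain g where g: "\<forall>l. l \<notin> set (k # ks) \<longrightarrow> g l = e l" "sat g p"
      by blast
    then have "\<forall>l. l \<notin> set ks \<longrightarrow> g l = (e(k := g k)) l"
      by auto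
    with g(2) have "sat (e(k := g k)) (Ex_list ks p)"
      using Cons.IH by blast
    then show "sat e (Ex_list (k # ks) p)"
      by auto
  qed
qed

primrec Conj_list :: "fm list \<Rightarrow> fm" where
  "Conj_list [] = Eq (Cst 0) (Cst 0)"
| "Conj_list (p # ps) = Conj p (Conj_list ps)"

lemma sat_Conj_list: "sat e (Conj_list ps) \<longleftrightarrow> (\<forall>p\<in>set ps. sat e p)"
  by (induction ps) auto

lemma sat_Conj_list_append:
  "sat e (Conj_list (ps @ qs)) \<longleftrightarrow> sat e (Conj_list ps) \<and> sat e (Conj_list qs)"
  by (auto simp: sat_Conj_list)

lemma sat_Conj_list_map_upt: "sat e (Conj_list (map f [0..<n])) \<longleftrightarrow> (\<forall>j<n. sat e (f j))"
  by (auto simp: sat_Conj_list)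

primrec Plus_list :: "tm list \<Rightarrow> tm" where
  "Plus_list [] = Cst 0"
| "Plus_list (s # ss) = Plus s (Plus_list ss)"

lemma tval_Plus_list: "tval e (Plus_list ss) = (\<Sum>s\<leftarrow>ss. tval e s)"
  by (induction ss) auto

definition Disj :: "fm \<Rightarrow> fm \<Rightarrow> fm" where
  "Disj p q = Neg (Conj (Neg p) (Neg q))"

lemma sat_Disj [simp]: "sat e (Disj p q) \<longleftrightarrow> sat e p \<or> sat e q"
  by (simp add: Disj_def)

text \<open>The graph of the selected function is defined by: some witness has \<open>v = y\<close>, or there
  is no witness and \<open>y = 0\<close>.\<close>

lemma inK_unique_selection:
  fixes Q :: "real \<Rightarrow> (nat \<Rightarrow> real) \<Rightarrow> bool"
  assumes vars: "0 \<notin> set ks" "1 \<notin> set ks" "v \<in> set ks"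
    and sat_iff: "\<And>t y g. \<forall>k. k \<notin> set ks \<longrightarrow> g k = graph_env t y k \<Longrightarrow> sat g \<psi> \<longleftrightarrow> Q t g"
    and local: "\<And>t g g'. \<forall>k\<in>set ks. g k = g' k \<Longrightarrow> Q t g \<longleftrightarrow> Q t g'"
    and unique: "\<And>t g g'. Q t g \<Longrightarrow> Q t g' \<Longrightarrow> g v = g' v"
  shows "inK (\<lambda>t. if \<exists>g. Q t g then (SOME g. Q t g) v else 0)"
  unfolding inK_iff_graph_env
proof (intro exI allI)
  fix t y
  define agrees where "agrees g \<longleftrightarrow> (\<forall>k. k \<notin> set ks \<longrightarrow> g k = graph_env t y k)" for g
  have patch: "\<exists>g'. agrees g' \<and> Q t g' \<and> g' v = g v" if "Q t g" for g
  proof (intro exI conjI)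
    let ?g' = "\<lambda>k. if k \<in> set ks then g k else graph_env t y k"
    show "agrees ?g'" by (simp add: agrees_def)
    show "Q t ?g'" using that local[of ?g' g] by simp
    show "?g' v = g v" using vars by simp
  qed
  have y: "g 1 = y" if "agrees g" for g
    using that vars by (simp add: agrees_def graph_env_def)
  have ex: "sat (graph_env t y) (Ex_list ks \<phi>) \<longleftrightarrow> (\<exists>g. agrees g \<and> sat g \<phi>)" for \<phi>
    by (simp add: sat_Ex_list agrees_def)
  have "graph_env t y 1 = y"
    by (simp add: graph_env_def)
  then have "sat (graph_env t y) (Disj (Ex_list ks (Conj \<psi> (Eq (Var v) (Var 1))))
      (Conj (Neg (Ex_list ks \<psi>)) (Eq (Var 1) (Cst 0)))) \<longleftrightarrow>
    (\<exists>g. agrees g \<and> sat g \<psi> \<and> g v = g 1) \<or> (\<not> (\<exists>g. agrees g \<and> sat g \<psi>) \<and> y = 0)"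
    by (simp add: ex)
  also have "\<dots> \<longleftrightarrow> (\<exists>g. agrees g \<and> Q t g \<and> g v = y) \<or> (\<not> (\<exists>g. agrees g \<and> Q t g) \<and> y = 0)"
    using y sat_iff unfolding agrees_def by metis
  also have "\<dots> \<longleftrightarrow> (\<exists>g. Q t g \<and> g v = y) \<or> (\<not> (\<exists>g. Q t g) \<and> y = 0)"
    using patch by blast
  also have "\<dots> \<longleftrightarrow> (if \<exists>g. Q t g then (SOME g. Q t g) v else 0) = y"
    using unique by (metis (mono_tags, lifting) someI)
  finally show "(if \<exists>g. Q t g then (SOME g. Q t g) v else 0) = y \<longleftrightarrow>
      sat (graph_env t y) (Disj (Ex_list ks (Conj \<psi> (Eq (Var v) (Var 1))))
        (Conj (Neg (Ex_list ks \<psi>)) (Eq (Var 1) (Cst 0))))" ..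
qed

section \<open>Definability of the central point\<close>

text \<open>The variables of the formula describing the central path equations at one time:
  one for each entry of \<open>A\<close>, \<open>b\<close>, \<open>c\<close>, for \<open>\<mu>\<close>, and for each unknown.\<close>

datatype slot = Coef nat nat | Rhs nat | Cost nat | Mu | PrimX nat | Slack nat | DualY nat | DualS nat

instance slot :: countable
  by countable_datatype

definition slot_var :: "slot \<Rightarrow> nat" where
  "slot_var \<sigma> = 2 * to_nat \<sigma> + 2"

lemma inj_slot_var: "inj slot_var"
  by (rule injI) (simp add: slot_var_def)

lemma slot_var_pos: "0 < slot_var \<sigma>"
  by (simp add: slot_var_def)

lemma even_slot_var: "even (slot_var \<sigma>)"
  by (simp add: slot_var_def)

definition data_slots :: "nat \<Rightarrow> nat \<Rightarrow> slot list" where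
  "data_slots m n = [Coef i j. i \<leftarrow> [0..<m], j \<leftarrow> [0..<n]] @ map Rhs [0..<m] @ map Cost [0..<n] @ [Mu]"

definition solution_slots :: "nat \<Rightarrow> nat \<Rightarrow> slot list" where
  "solution_slots m n = map PrimX [0..<n] @ map Slack [0..<m] @ map DualY [0..<m] @ map DualS [0..<n]"

fun datum :: "gmat \<Rightarrow> gvec \<Rightarrow> gvec \<Rightarrow> (real \<Rightarrow> real) \<Rightarrow> slot \<Rightarrow> real \<Rightarrow> real" where
  "datum A b c \<mu> (Coef i j) = A i j"
| "datum A b c \<mu> (Rhs i) = b i"
| "datum A b c \<mu> (Cost j) = c j"
| "datum A b c \<mu> Mu = \<mu>"
| "datum A b c \<mu> _ = (\<lambda>_. 0)"

definition central_at :: "nat \<Rightarrow> nat \<Rightarrow> gmat \<Rightarrow> gvec \<Rightarrow> gvec \<Rightarrow> (real \<Rightarrow> real) \<Rightarrow> real \<Rightarrow> (slot \<Rightarrow> real) \<Rightarrow> bool" where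
  "central_at m n A b c \<mu> t val \<longleftrightarrow> central_eqs m n (\<lambda>i j. A i j t) (\<lambda>i. b i t) (\<lambda>j. c j t) (\<mu> t)
     (\<lambda>j. val (PrimX j)) (\<lambda>i. val (Slack i)) (\<lambda>i. val (DualY i)) (\<lambda>j. val (DualS j))"

abbreviation slot_tm :: "slot \<Rightarrow> tm" where
  "slot_tm \<sigma> \<equiv> Var (slot_var \<sigma>)"

definition central_fm :: "nat \<Rightarrow> nat \<Rightarrow> fm" where
  "central_fm m n = Conj_list (
     map (\<lambda>j. Lt (Cst 0) (slot_tm (PrimX j))) [0..<n] @
     map (\<lambda>i. Lt (Cst 0) (slot_tm (Slack i))) [0..<m] @
     map (\<lambda>i. Eq (Plus (Plus_list (map (\<lambda>j. Times (slot_tm (Coef i j)) (slot_tm (PrimX j))) [0..<n]))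
                       (slot_tm (Slack i))) (slot_tm (Rhs i))) [0..<m] @
     map (\<lambda>i. Lt (Cst 0) (slot_tm (DualY i))) [0..<m] @
     map (\<lambda>j. Lt (Cst 0) (slot_tm (DualS j))) [0..<n] @
     map (\<lambda>j. Eq (Plus (Plus_list (map (\<lambda>i. Times (Uminus (slot_tm (Coef i j))) (slot_tm (DualY i))) [0..<m]))
                       (slot_tm (DualS j))) (slot_tm (Cost j))) [0..<n] @
     map (\<lambda>i. Eq (Times (slot_tm (Slack i)) (slot_tm (DualY i))) (slot_tm Mu)) [0..<m] @
     map (\<lambda>j. Eq (Times (slot_tm (PrimX j)) (slot_tm (DualS j))) (slot_tm Mu)) [0..<n])"

lemma sat_central_fm:
  "sat g (central_fm m n) \<longleftrightarrow> central_eqs m n (\<lambda>i j. g (slot_var (Coef i j))) (\<lambda>i. g (slot_var (Rhs i)))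
     (\<lambda>j. g (slot_var (Cost j))) (g (slot_var Mu)) (\<lambda>j. g (slot_var (PrimX j)))
     (\<lambda>i. g (slot_var (Slack i))) (\<lambda>i. g (slot_var (DualY i))) (\<lambda>j. g (slot_var (DualS j)))"
  by (simp add: central_fm_def sat_Conj_list_append sat_Conj_list_map_upt tval_Plus_list
      central_eqs_def strictly_feasible_def neg_transpose_def interv_sum_list_conv_sum_set_nat
      atLeast0LessThan conj_ac)

lemma set_data_slots [simp]:
  "Coef i j \<in> set (data_slots m n) \<longleftrightarrow> i < m \<and> j < n" "Rhs i \<in> set (data_slots m n) \<longleftrightarrow> i < m"
  "Cost j \<in> set (data_slots m n) \<longleftrightarrow> j < n" "Mu \<in> set (data_slots m n)"
  "PrimX j \<notin> set (data_slots m n)" "Slack i \<notin> set (data_slots m n)"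
  "DualY i \<notin> set (data_slots m n)" "DualS j \<notin> set (data_slots m n)"
  by (force simp: data_slots_def)+

lemma set_solution_slots [simp]:
  "PrimX j \<in> set (solution_slots m n) \<longleftrightarrow> j < n" "Slack i \<in> set (solution_slots m n) \<longleftrightarrow> i < m"
  "DualY i \<in> set (solution_slots m n) \<longleftrightarrow> i < m" "DualS j \<in> set (solution_slots m n) \<longleftrightarrow> j < n"
  by (auto simp: solution_slots_def)

lemma solution_slots_cases:
  assumes "\<sigma> \<in> set (solution_slots m n)"
  obtains j where "j < n" "\<sigma> = PrimX j" | i where "i < m" "\<sigma> = Slack i"
    | i where "i < m" "\<sigma> = DualY i" | j where "j < n" "\<sigma> = DualS j"
  using assms by (auto simp: solution_slots_def)

definition central_env ::
  "nat \<Rightarrow> nat \<Rightarrow> gmat \<Rightarrow> gvec \<Rightarrow> gvec \<Rightarrow> (real \<Rightarrow> real) \<Rightarrow> real \<Rightarrow> (nat \<Rightarrow> real) \<Rightarrow> bool" where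
  "central_env m n A b c \<mu> t g \<longleftrightarrow>
     (\<forall>\<sigma>\<in>set (data_slots m n). g (slot_var \<sigma>) = datum A b c \<mu> \<sigma> t) \<and> central_at m n A b c \<mu> t (g \<circ> slot_var)"

lemma central_env_central_at: "central_env m n A b c \<mu> t g \<Longrightarrow> central_at m n A b c \<mu> t (g \<circ> slot_var)"
  by (simp add: central_env_def)

lemma central_env_local:
  assumes "\<forall>\<sigma>\<in>set (data_slots m n @ solution_slots m n). g (slot_var \<sigma>) = g' (slot_var \<sigma>)"
  shows "central_env m n A b c \<mu> t g \<longleftrightarrow> central_env m n A b c \<mu> t g'"
proof -
  have "central_at m n A b c \<mu> t (g \<circ> slot_var) \<longleftrightarrow> central_at m n A b c \<mu> t (g' \<circ> slot_var)"
    unfolding central_at_def using assms by (intro central_eqs_cong) auto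
  then show ?thesis
    using assms by (auto simp: central_env_def)
qed

lemma central_env_unique:
  assumes "central_env m n A b c \<mu> t g" "central_env m n A b c \<mu> t g'" "\<sigma> \<in> set (solution_slots m n)"
  shows "g (slot_var \<sigma>) = g' (slot_var \<sigma>)"
proof -
  have "central_at m n A b c \<mu> t (g \<circ> slot_var)" "central_at m n A b c \<mu> t (g' \<circ> slot_var)"
    using assms(1,2) by (simp_all add: central_env_def)
  note eq = central_eqs_unique[OF this[unfolded central_at_def]]
  from assms(3) show ?thesis
    by (cases rule: solution_slots_cases) (use eq in auto)
qed

lemma central_env_exists:
  assumes "central_eqs m n (\<lambda>i j. A i j t) (\<lambda>i. b i t) (\<lambda>j. c j t) (\<mu> t) x w y s"
  shows "\<exists>g. central_env m n A b c \<mu> t g"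
proof
  define val where "val \<sigma> = (case \<sigma> of PrimX j \<Rightarrow> x j | Slack i \<Rightarrow> w i | DualY i \<Rightarrow> y i
    | DualS j \<Rightarrow> s j | _ \<Rightarrow> datum A b c \<mu> \<sigma> t)" for \<sigma>
  have "(\<lambda>k. val (inv slot_var k)) \<circ> slot_var = val"
    by (simp add: fun_eq_iff inv_f_f[OF inj_slot_var])
  moreover have "\<forall>\<sigma>\<in>set (data_slots m n). val \<sigma> = datum A b c \<mu> \<sigma> t"
    by (auto simp: val_def data_slots_def)
  moreover have "(\<lambda>j. val (PrimX j)) = x" "(\<lambda>i. val (Slack i)) = w"
    "(\<lambda>i. val (DualY i)) = y" "(\<lambda>j. val (DualS j)) = s"
    by (simp_all add: val_def)
  ultimately show "central_env m n A b c \<mu> t (\<lambda>k. val (inv slot_var k))"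
    using assms by (simp add: central_env_def central_at_def inv_f_f[OF inj_slot_var])
qed

text \<open>Renaming a defining formula of a datum into the slot variables: its argument stays
  variable 0, its value becomes the slot variable (even), and its bound and parameter variables
  move to odd numbers, which no slot variable uses.\<close>

definition slot_rename :: "slot \<Rightarrow> nat \<Rightarrow> nat" where
  "slot_rename \<sigma> k = (if k = 0 then 0 else if k = 1 then slot_var \<sigma> else 2 * k + 1)"

lemma inj_slot_rename: "inj (slot_rename \<sigma>)"
  using even_slot_var[of \<sigma>] slot_var_pos[of \<sigma>]
  by (auto intro!: injI simp: slot_rename_def split: if_splits) presburger+

lemma sat_rename_slot:
  assumes "\<forall>k. odd k \<longrightarrow> 1 < k \<longrightarrow> g k = 0"
  shows "sat g (rename_fm (slot_rename \<sigma>) \<phi>) \<longleftrightarrow> sat (graph_env (g 0) (g (slot_var \<sigma>))) \<phi>"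
proof -
  have "g \<circ> slot_rename \<sigma> = graph_env (g 0) (g (slot_var \<sigma>))"
    using assms by (auto simp: fun_eq_iff slot_rename_def graph_env_def)
  then show ?thesis
    by (simp add: sat_rename_fm[OF inj_slot_rename])
qed

definition data_fm :: "(slot \<Rightarrow> fm) \<Rightarrow> nat \<Rightarrow> nat \<Rightarrow> fm" where
  "data_fm \<Phi> m n = Conj_list (map (\<lambda>\<sigma>. rename_fm (slot_rename \<sigma>) (\<Phi> \<sigma>)) (data_slots m n))"

lemma sat_central_env_fm:
  assumes graphs: "\<forall>\<sigma>\<in>set (data_slots m n). \<forall>t y. datum A b c \<mu> \<sigma> t = y \<longleftrightarrow> sat (graph_env t y) (\<Phi> \<sigma>)"
    and agree: "\<forall>k. k \<notin> set (map slot_var (data_slots m n @ solution_slots m n)) \<longrightarrow> g k = graph_env t y k"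
  shows "sat g (Conj (data_fm \<Phi> m n) (central_fm m n)) \<longleftrightarrow> central_env m n A b c \<mu> t g"
proof -
  have "0 \<notin> set (map slot_var (data_slots m n @ solution_slots m n))"
    using slot_var_pos by (auto simp: image_iff)
  then have "g 0 = t"
    using agree by (simp add: graph_env_def)
  moreover have "\<forall>k. odd k \<longrightarrow> 1 < k \<longrightarrow> g k = 0"
  proof (intro allI impI)
    fix k :: nat assume "odd k" "1 < k"
    then have "k \<notin> set (map slot_var (data_slots m n @ solution_slots m n))"
      using even_slot_var by auto
    with agree \<open>1 < k\<close> show "g k = 0"
      by (simp add: graph_env_def)
  qed
  ultimately have "sat g (data_fm \<Phi> m n) \<longleftrightarrow>
      (\<forall>\<sigma>\<in>set (data_slots m n). sat (graph_env t (g (slot_var \<sigma>))) (\<Phi> \<sigma>))"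
    by (simp add: data_fm_def sat_Conj_list sat_rename_slot)
  also have "\<dots> \<longleftrightarrow> (\<forall>\<sigma>\<in>set (data_slots m n). g (slot_var \<sigma>) = datum A b c \<mu> \<sigma> t)"
    by (intro ball_cong refl) (metis graphs)
  finally have data: "sat g (data_fm \<Phi> m n) \<longleftrightarrow>
      (\<forall>\<sigma>\<in>set (data_slots m n). g (slot_var \<sigma>) = datum A b c \<mu> \<sigma> t)" .
  moreover have "central_eqs m n (\<lambda>i j. g (slot_var (Coef i j))) (\<lambda>i. g (slot_var (Rhs i)))
      (\<lambda>j. g (slot_var (Cost j))) (g (slot_var Mu)) x w y s \<longleftrightarrow>
    central_eqs m n (\<lambda>i j. A i j t) (\<lambda>i. b i t) (\<lambda>j. c j t) (\<mu> t) x w y s"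
    if "\<forall>\<sigma>\<in>set (data_slots m n). g (slot_var \<sigma>) = datum A b c \<mu> \<sigma> t" for x w y s
    using that by (intro central_eqs_cong) auto
  ultimately show ?thesis
    unfolding sat.simps sat_central_fm central_env_def central_at_def by auto
qed

definition central_component ::
  "nat \<Rightarrow> nat \<Rightarrow> gmat \<Rightarrow> gvec \<Rightarrow> gvec \<Rightarrow> (real \<Rightarrow> real) \<Rightarrow> slot \<Rightarrow> real \<Rightarrow> real" where
  "central_component m n A b c \<mu> \<sigma> t =
     (if \<exists>g. central_env m n A b c \<mu> t g then (SOME g. central_env m n A b c \<mu> t g) (slot_var \<sigma>) else 0)"

lemma inK_central_component:
  assumes data: "\<forall>\<sigma>\<in>set (data_slots m n). inK (datum A b c \<mu> \<sigma>)"
    and \<sigma>: "\<sigma> \<in> set (solution_slots m n)"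
  shows "inK (central_component m n A b c \<mu> \<sigma>)"
proof -
  from data have "\<forall>\<sigma>\<in>set (data_slots m n). \<exists>\<phi>. \<forall>t y. datum A b c \<mu> \<sigma> t = y \<longleftrightarrow> sat (graph_env t y) \<phi>"
    by (simp add: inK_iff_graph_env)
  then obtain \<Phi> where graphs:
    "\<forall>\<sigma>\<in>set (data_slots m n). \<forall>t y. datum A b c \<mu> \<sigma> t = y \<longleftrightarrow> sat (graph_env t y) (\<Phi> \<sigma>)"
    by metis
  have "0 \<notin> set (map slot_var (data_slots m n @ solution_slots m n))"
    "1 \<notin> set (map slot_var (data_slots m n @ solution_slots m n))"
    by (auto simp: slot_var_def)
  then show ?thesis
    unfolding central_component_def
  proof (rule inK_unique_selection[where \<psi> = "Conj (data_fm \<Phi> m n) (central_fm m n)"])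
    show "slot_var \<sigma> \<in> set (map slot_var (data_slots m n @ solution_slots m n))"
      using \<sigma> by simp
    show "central_env m n A b c \<mu> t g \<longleftrightarrow> central_env m n A b c \<mu> t g'"
      if "\<forall>k\<in>set (map slot_var (data_slots m n @ solution_slots m n)). g k = g' k" for t g g'
      using that by (intro central_env_local) auto
  qed (use sat_central_env_fm[OF graphs] central_env_unique[OF _ _ \<sigma>] in auto)
qed

section \<open>Germs\<close>

lemma neg_transpose_apply: "neg_transpose A j i t = - A i j t"
  by (simp add: neg_transpose_def)

lemma neg_transpose_at: "neg_transpose (\<lambda>i j. A i j t) = (\<lambda>j i. neg_transpose A j i t)"
  by (simp add: neg_transpose_def fun_eq_iff)

lemma primal_feasible_iff:
  "primal_feasible m n A b x w \<longleftrightarrow> vecK n x \<and> vecK m w \<and>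
     (\<forall>\<^sub>F t in at_top. strictly_feasible m n (\<lambda>i j. A i j t) (\<lambda>i. b i t) (\<lambda>j. x j t) (\<lambda>i. w i t))"
  by (simp add: primal_feasible_def vec_pos_def primal_eq_def germ_pos_def germ_eq_def
      strictly_feasible_def eventually_conj_iff eventually_all_less conj_ac)

lemma dual_eq_iff_transpose: "dual_eq m n A c y s \<longleftrightarrow> primal_eq n m (neg_transpose A) c y s"
  by (simp add: dual_eq_def primal_eq_def neg_transpose_apply sum_negf)

lemma dual_feasible_iff_transpose: "dual_feasible m n A c y s \<longleftrightarrow> primal_feasible n m (neg_transpose A) c y s"
  by (auto simp: dual_feasible_def primal_feasible_def dual_eq_iff_transpose)

lemma central_point_iff:
  "central_point m n A b c \<mu> x w y s \<longleftrightarrow> vecK n x \<and> vecK m w \<and> vecK m y \<and> vecK n s \<and>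
     (\<forall>\<^sub>F t in at_top. central_eqs m n (\<lambda>i j. A i j t) (\<lambda>i. b i t) (\<lambda>j. c j t) (\<mu> t)
        (\<lambda>j. x j t) (\<lambda>i. w i t) (\<lambda>i. y i t) (\<lambda>j. s j t))"
proof -
  have "central_point m n A b c \<mu> x w y s \<longleftrightarrow>
      primal_feasible m n A b x w \<and> primal_feasible n m (neg_transpose A) c y s \<and>
      (\<forall>i<m. germ_eq (\<lambda>t. w i t * y i t) \<mu>) \<and> (\<forall>j<n. germ_eq (\<lambda>t. x j t * s j t) \<mu>)"
    by (auto simp: central_point_def primal_feasible_def dual_eq_iff_transpose)
  then show ?thesis
    by (simp add: primal_feasible_iff central_eqs_def germ_eq_def neg_transpose_at eventually_conj_iff
        eventually_all_less conj_ac)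
qed

lemma central_point_transpose:
  "central_point n m (neg_transpose A) c b \<mu> y s x w \<longleftrightarrow> central_point m n A b c \<mu> x w y s"
  unfolding central_point_iff neg_transpose_at[symmetric] central_eqs_transpose by auto

lemma primal_obj_at: "primal_obj m n c \<mu> x w t = primal_barrier m n (\<lambda>j. c j t) (\<mu> t) (\<lambda>j. x j t) (\<lambda>i. w i t)"
  by (simp add: primal_obj_def primal_barrier_def)

lemma dual_obj_transpose: "dual_obj m n b \<mu> y s t = - primal_obj n m b \<mu> y s t"
  by (simp add: dual_obj_def primal_obj_def algebra_simps)

lemma dual_optimal_iff_transpose:
  "dual_optimal m n A b c \<mu> y s \<longleftrightarrow> primal_optimal n m (neg_transpose A) c b \<mu> y s"
  by (simp add: dual_optimal_def primal_optimal_def dual_feasible_iff_transpose germ_le_def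
      dual_obj_transpose)

lemma central_point_primal_optimal:
  assumes central: "central_point m n A b c \<mu> x w y s"
  shows "primal_optimal m n A b c \<mu> x w \<and>
    (\<forall>x' w'. primal_optimal m n A b c \<mu> x' w' \<longrightarrow>
       (\<forall>j<n. germ_eq (x' j) (x j)) \<and> (\<forall>i<m. germ_eq (w' i) (w i)))"
proof -
  let ?central = "\<lambda>t. central_eqs m n (\<lambda>i j. A i j t) (\<lambda>i. b i t) (\<lambda>j. c j t) (\<mu> t)
    (\<lambda>j. x j t) (\<lambda>i. w i t) (\<lambda>i. y i t) (\<lambda>j. s j t)"
  have ev: "\<forall>\<^sub>F t in at_top. ?central t"
    using central by (simp add: central_point_iff)
  have feasible: "primal_feasible m n A b x w"
    using central by (simp add: central_point_def primal_feasible_def)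
  have le: "germ_le (primal_obj m n c \<mu> x w) (primal_obj m n c \<mu> x' w')"
    if "primal_feasible m n A b x' w'" for x' w'
  proof -
    from that have "\<forall>\<^sub>F t in at_top.
        strictly_feasible m n (\<lambda>i j. A i j t) (\<lambda>i. b i t) (\<lambda>j. x' j t) (\<lambda>i. w' i t)"
      by (simp add: primal_feasible_iff)
    with ev show ?thesis
      unfolding germ_le_def primal_obj_at
      by eventually_elim (rule central_eqs_minimizes_primal_barrier(1))
  qed
  have "(\<forall>j<n. germ_eq (x' j) (x j)) \<and> (\<forall>i<m. germ_eq (w' i) (w i))"
    if "primal_optimal m n A b c \<mu> x' w'" for x' w'
  proof -
    have "\<forall>\<^sub>F t in at_top. strictly_feasible m n (\<lambda>i j. A i j t) (\<lambda>i. b i t) (\<lambda>j. x' j t) (\<lambda>i. w' i t)"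
      and "germ_le (primal_obj m n c \<mu> x' w') (primal_obj m n c \<mu> x w)"
      using that feasible by (simp_all add: primal_optimal_def primal_feasible_iff)
    with ev have "\<forall>\<^sub>F t in at_top. (\<forall>j<n. x' j t = x j t) \<and> (\<forall>i<m. w' i t = w i t)"
      unfolding germ_le_def primal_obj_at
      by eventually_elim (rule central_eqs_minimizes_primal_barrier(2))
    then show ?thesis
      by (simp add: germ_eq_def eventually_conj_iff eventually_all_less)
  qed
  with feasible le show ?thesis
    by (simp add: primal_optimal_def)
qed

lemma central_point_dual_optimal:
  assumes "central_point m n A b c \<mu> x w y s"
  shows "dual_optimal m n A b c \<mu> y s \<and>
    (\<forall>y' s'. dual_optimal m n A b c \<mu> y' s' \<longrightarrow>
       (\<forall>i<m. germ_eq (y' i) (y i)) \<and> (\<forall>j<n. germ_eq (s' j) (s j)))"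
  using central_point_primal_optimal[of n m "neg_transpose A" c b \<mu> y s x w] assms
  by (simp add: central_point_transpose dual_optimal_iff_transpose)

lemma central_point_exists:
  assumes "matK m n A" "vecK m b" "vecK n c" "inK \<mu>"
    and solvable: "\<forall>\<^sub>F t in at_top.
      \<exists>x w y s. central_eqs m n (\<lambda>i j. A i j t) (\<lambda>i. b i t) (\<lambda>j. c j t) (\<mu> t) x w y s"
  shows "\<exists>x w y s. central_point m n A b c \<mu> x w y s"
proof -
  let ?comp = "central_component m n A b c \<mu>"
  have "\<forall>\<sigma>\<in>set (data_slots m n). inK (datum A b c \<mu> \<sigma>)"
    using assms(1-4) by (auto simp: data_slots_def matK_def vecK_def)
  then have "\<forall>\<sigma>\<in>set (solution_slots m n). inK (?comp \<sigma>)"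
    by (blast intro: inK_central_component)
  then have "vecK n (\<lambda>j. ?comp (PrimX j))" "vecK m (\<lambda>i. ?comp (Slack i))"
    "vecK m (\<lambda>i. ?comp (DualY i))" "vecK n (\<lambda>j. ?comp (DualS j))"
    by (simp_all add: vecK_def)
  moreover have "\<forall>\<^sub>F t in at_top. central_eqs m n (\<lambda>i j. A i j t) (\<lambda>i. b i t) (\<lambda>j. c j t) (\<mu> t)
      (\<lambda>j. ?comp (PrimX j) t) (\<lambda>i. ?comp (Slack i) t) (\<lambda>i. ?comp (DualY i) t) (\<lambda>j. ?comp (DualS j) t)"
    using solvable
  proof eventually_elim
    case (elim t)
    then have "\<exists>g. central_env m n A b c \<mu> t g"
      by (blast intro: central_env_exists)
    then have "central_at m n A b c \<mu> t ((SOME g. central_env m n A b c \<mu> t g) \<circ> slot_var)"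
      by (rule central_env_central_at[OF someI_ex])
    with \<open>\<exists>g. central_env m n A b c \<mu> t g\<close> show ?case
      by (simp add: central_at_def central_component_def)
  qed
  ultimately show ?thesis
    by (auto simp: central_point_iff)
qed

theorem mainTheorem4:
  fixes m n :: nat and A :: gmat and b c :: gvec and \<mu> :: "real \<Rightarrow> real"
  assumes "matK m n A" and "vecK m b" and "vecK n c"
    and "assumption_A m n A b c"
    and "inK \<mu>" and "germ_pos \<mu>"
  shows "(\<exists>x w y s. central_point m n A b c \<mu> x w y s) \<and>
    (\<forall>x w y s. central_point m n A b c \<mu> x w y s \<longrightarrow>
       primal_optimal m n A b c \<mu> x w \<and>
       (\<forall>x' w'. primal_optimal m n A b c \<mu> x' w' \<longrightarrow>
          (\<forall>j<n. germ_eq (x' j) (x j)) \<and> (\<forall>i<m. germ_eq (w' i) (w i))) \<and>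
       dual_optimal m n A b c \<mu> y s \<and>
       (\<forall>y' s'. dual_optimal m n A b c \<mu> y' s' \<longrightarrow>
          (\<forall>i<m. germ_eq (y' i) (y i)) \<and> (\<forall>j<n. germ_eq (s' j) (s j))))"
proof -
  obtain x0 w0 y0 s0 where "primal_feasible m n A b x0 w0" "dual_feasible m n A c y0 s0"
    using assms(4) by (auto simp: assumption_A_def primal_feasible_def dual_feasible_def)
  then have "\<forall>\<^sub>F t in at_top. 0 < \<mu> t \<and>
      strictly_feasible m n (\<lambda>i j. A i j t) (\<lambda>i. b i t) (\<lambda>j. x0 j t) (\<lambda>i. w0 i t) \<and>
      strictly_feasible n m (neg_transpose (\<lambda>i j. A i j t)) (\<lambda>j. c j t) (\<lambda>i. y0 i t) (\<lambda>j. s0 j t)"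
    using assms(6) by (simp add: germ_pos_def primal_feasible_iff dual_feasible_iff_transpose
        neg_transpose_at eventually_conj_iff)
  then have "\<forall>\<^sub>F t in at_top.
      \<exists>x w y s. central_eqs m n (\<lambda>i j. A i j t) (\<lambda>i. b i t) (\<lambda>j. c j t) (\<mu> t) x w y s"
    by (rule eventually_mono) (blast intro: central_eqs_exists)
  with assms(1-3,5) have "\<exists>x w y s. central_point m n A b c \<mu> x w y s"
    by (rule central_point_exists)
  then show ?thesis
    using central_point_primal_optimal central_point_dual_optimal by simp
qed

end
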